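(* Let $n \geq 3$ and let $S$ be a $4$-cap free, $n$-cup free configuration. If $S$ contains a pair of interweaved laced $(n-1)$-cups, then $S$ contains a $(3, n-1)$-gon.
   Context: A configuration is a finite set $S$ of points with a linear order $<$ and, for every $3$-element subset, an arbitrary assignment declaring it either a cap or a cup. Points $x_1<\cdots<x_a$ form an $a$-cup (resp. $a$-cap) if every consecutive triple $\{x_{i-1},x_i,x_{i+1}\}$, $1<i<a$, is assigned cup (resp. cap); $1$- and $2$-element sets are both caps and cups. The size of a cup is its number of points; a cup $x_1\cdots x_a$ runs from (starts with) $x_1$ to (ends with) $x_a$. Two cups $C_1$, $C_2$ running from $p$ to $r$ and from $q$ to $s$ respectively are interweaved if $p<q\le r<s$. An $(n-1)$-cup $C$ from $p$ to $q$ is laced if there exist a cup $C_p$ ending with $p$ and a cup $C_q$ starting with $q$ such that $|C_p|+|C_q|=n-1$. A (weak) $(a,b)$-gon is a pair consisting of an $a$-cap and a $b$-cup with the same two endpoints (they may share other vertices). *)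

theory Defs
  imports Main
begin

text \<open>A configuration is a finite set S of points of a linearly ordered type together with
  an assignment to each 3-element subset {x<y<z} of being a cup (cupT x y z) or a cap
  (\<not> cupT x y z).  Only the values of cupT on strictly increasing triples from S matter.\<close>

definition is_cup :: "'a::linorder set \<Rightarrow> ('a \<Rightarrow> 'a \<Rightarrow> 'a \<Rightarrow> bool) \<Rightarrow> 'a list \<Rightarrow> bool" where
  "is_cup S cupT xs \<longleftrightarrow> xs \<noteq> [] \<and> set xs \<subseteq> S \<and> sorted_wrt (<) xs \<and>
     (\<forall>i. 0 < i \<and> i + 1 < length xs \<longrightarrow> cupT (xs!(i-1)) (xs!i) (xs!(i+1)))"

definition is_cap :: "'a::linorder set \<Rightarrow> ('a \<Rightarrow> 'a \<Rightarrow> 'a \<Rightarrow> bool) \<Rightarrow> 'a list \<Rightarrow> bool" where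
  "is_cap S cupT xs \<longleftrightarrow> xs \<noteq> [] \<and> set xs \<subseteq> S \<and> sorted_wrt (<) xs \<and>
     (\<forall>i. 0 < i \<and> i + 1 < length xs \<longrightarrow> \<not> cupT (xs!(i-1)) (xs!i) (xs!(i+1)))"

definition laced :: "'a::linorder set \<Rightarrow> ('a \<Rightarrow> 'a \<Rightarrow> 'a \<Rightarrow> bool) \<Rightarrow> nat \<Rightarrow> 'a list \<Rightarrow> bool" where
  "laced S cupT n C \<longleftrightarrow> is_cup S cupT C \<and> length C = n - 1 \<and>
     (\<exists>Cp Cq. is_cup S cupT Cp \<and> last Cp = hd C \<and> is_cup S cupT Cq \<and> hd Cq = last C \<and>
              length Cp + length Cq = n - 1)"

definition interweaved :: "'a::linorder list \<Rightarrow> 'a list \<Rightarrow> bool" where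
  "interweaved C1 C2 \<longleftrightarrow> hd C1 < hd C2 \<and> hd C2 \<le> last C1 \<and> last C1 < last C2"

definition has_gon :: "'a::linorder set \<Rightarrow> ('a \<Rightarrow> 'a \<Rightarrow> 'a \<Rightarrow> bool) \<Rightarrow> nat \<Rightarrow> nat \<Rightarrow> bool" where
  "has_gon S cupT a b \<longleftrightarrow> (\<exists>A B. is_cap S cupT A \<and> length A = a \<and> is_cup S cupT B \<and> length B = b
      \<and> hd A = hd B \<and> last A = last B)"

end

theory Submission
  imports Defs
begin

(* Let C1 run from p to r and C2 from q to s.  If q < r, a cap p q r or q r s closes a gon with
   C1 or C2.  Otherwise both triples are cups; then the cups lacing C1 join through q into an
   n-cup unless some q r v is a cap, the cups lacing C2 join through r unless some u q r is a
   cap, and u q r v would be a 4-cap.  If q = r, replacing the last point of C1 by the second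
   point of C2, or the first point of C2 by the penultimate point of C1, yields an (n-1)-cup
   closing a gon with a 3-cap through r; if neither is a cup, the four points around r form a
   4-cap.  The caps used along the way come from the maximality of the (n-1)-cups C1, C2 and
   the absence of 4-caps. *)

lemma is_cup_singleton [simp]: "is_cup S c [x] \<longleftrightarrow> x \<in> S"
  by (simp add: is_cup_def)

lemma is_cup_Cons_Cons:
  "is_cup S c (x # y # zs) \<longleftrightarrow>
     x \<in> S \<and> x < y \<and> (zs \<noteq> [] \<longrightarrow> c x y (hd zs)) \<and> is_cup S c (y # zs)"
proof -
  let ?T = "\<lambda>xs i. 0 < i \<and> i + 1 < length xs \<longrightarrow> c (xs!(i-1)) (xs!i) (xs!(i+1))"
  have "(\<forall>i. ?T (x # y # zs) i) \<longleftrightarrow> ?T (x # y # zs) 1 \<and> (\<forall>i. ?T (x # y # zs) (Suc (Suc i)))"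
    by (metis One_nat_def not0_implies_Suc not_gr_zero)
  also have "\<dots> \<longleftrightarrow> (zs \<noteq> [] \<longrightarrow> c x y (hd zs)) \<and> (\<forall>i. ?T (y # zs) (Suc i))"
    by (cases zs) auto
  also have "\<dots> \<longleftrightarrow> (zs \<noteq> [] \<longrightarrow> c x y (hd zs)) \<and> (\<forall>i. ?T (y # zs) i)"
    by (metis not0_implies_Suc not_gr_zero)
  finally show ?thesis
    unfolding is_cup_def by (auto intro: less_trans)
qed

lemma is_cup_append:
  assumes "xs \<noteq> []" and "ys \<noteq> []"
  shows "is_cup S c (xs @ ys) \<longleftrightarrow> is_cup S c xs \<and> is_cup S c ys \<and> last xs < hd ys \<and>
    (butlast xs \<noteq> [] \<longrightarrow> c (last (butlast xs)) (last xs) (hd ys)) \<and>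
    (tl ys \<noteq> [] \<longrightarrow> c (last xs) (hd ys) (hd (tl ys)))"
  using assms
proof (induction xs rule: induct_list012)
  case (2 x)
  then show ?case by (cases ys) (auto simp: is_cup_Cons_Cons)
next
  case (3 x x' xs)
  then show ?case by (cases xs) (auto simp: is_cup_Cons_Cons)
qed simp

lemma is_cup_not_Nil: "is_cup S c xs \<Longrightarrow> xs \<noteq> []"
  by (simp add: is_cup_def)

lemma is_cup_hd_last_in:
  assumes "is_cup S c xs"
  shows "hd xs \<in> S" and "last xs \<in> S"
  using assms by (auto simp: is_cup_def)

lemma is_cup_hd_less_last: "is_cup S c xs \<Longrightarrow> tl xs \<noteq> [] \<Longrightarrow> hd xs < last xs"
  by (cases xs) (auto simp: is_cup_def)

lemma is_cup_tl:
  assumes "is_cup S c xs" and "tl xs \<noteq> []"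
  shows "is_cup S c (tl xs)" and "hd xs < hd (tl xs)"
  using assms is_cup_append[of "[hd xs]" "tl xs"] by (cases xs; simp)+

lemma is_cup_butlast:
  assumes "is_cup S c xs" and "butlast xs \<noteq> []"
  shows "is_cup S c (butlast xs)" and "last (butlast xs) < last xs"
  using assms is_cup_append[of "butlast xs" "[last xs]"]
  by (metis append_butlast_last_id butlast.simps(1) list.sel(1) not_Cons_self2)+

lemma is_cap_iff_is_cup_neg: "is_cap S c xs \<longleftrightarrow> is_cup S (\<lambda>x y z. \<not> c x y z) xs"
  by (simp add: is_cap_def is_cup_def)

lemma has_gon_3I:
  assumes "is_cup S c B" and "y \<in> S" and "hd B < y" and "y < last B" and "\<not> c (hd B) y (last B)"
  shows "has_gon S c 3 (length B)"
proof -
  have "is_cap S c [hd B, y, last B]"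
    using assms is_cup_hd_last_in[OF assms(1)] by (simp add: is_cap_iff_is_cup_neg is_cup_Cons_Cons)
  then show ?thesis
    using assms(1) unfolding has_gon_def by fastforce
qed

lemma laced_bypass:
  assumes "laced S c n C" and "q \<in> S" and "hd C < q" and "q < last C" and "c (hd C) q (last C)"
    and "\<And>x. x \<in> S \<Longrightarrow> x < hd C \<Longrightarrow> c x (hd C) q"
    and "\<And>v. v \<in> S \<Longrightarrow> last C < v \<Longrightarrow> c q (last C) v"
  shows "\<exists>D. is_cup S c D \<and> length D = n"
proof -
  \<comment> \<open>The n-cup is Cp, q, Cq, where the cups Cp and Cq lace C.\<close>
  obtain Cp Cq where Cp: "is_cup S c Cp" "last Cp = hd C" and Cq: "is_cup S c Cq" "hd Cq = last C"
    and len: "length Cp + length Cq = n - 1" and "C \<noteq> []" "length C = n - 1"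
    using assms(1) by (auto simp: laced_def is_cup_def)
  have "Cp \<noteq> []" "Cq \<noteq> []"
    using Cp Cq by (auto simp: is_cup_def)
  have "last (butlast Cp) \<in> S" if "butlast Cp \<noteq> []"
    using is_cup_hd_last_in(2)[OF is_cup_butlast(1)[OF Cp(1) that]] .
  then have "is_cup S c (Cp @ [q])"
    using Cp is_cup_butlast[OF Cp(1)] assms(2,3,6) \<open>Cp \<noteq> []\<close>
    by (simp add: is_cup_append)
  moreover have "hd (tl Cq) \<in> S" if "tl Cq \<noteq> []"
    using is_cup_hd_last_in(1)[OF is_cup_tl(1)[OF Cq(1) that]] .
  ultimately have "is_cup S c ((Cp @ [q]) @ Cq)"
    using is_cup_append[of "Cp @ [q]" Cq] Cp(2) Cq is_cup_tl[OF Cq(1)] assms(4,5,7) \<open>Cq \<noteq> []\<close>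
    by simp
  moreover have "length ((Cp @ [q]) @ Cq) = n"
    using len \<open>C \<noteq> []\<close> \<open>length C = n - 1\<close> by (cases n) auto
  ultimately show ?thesis by blast
qed

locale cap4_free_cupn_free =
  fixes S :: "'a::linorder set" and cupT :: "'a \<Rightarrow> 'a \<Rightarrow> 'a \<Rightarrow> bool" and n :: nat
  assumes n_ge_3: "3 \<le> n"
    and no_4cap: "\<And>C. is_cap S cupT C \<Longrightarrow> length C \<noteq> 4"
    and no_ncup: "\<And>C. is_cup S cupT C \<Longrightarrow> length C \<noteq> n"
begin

lemma cup_among_four:
  assumes "a \<in> S" "b \<in> S" "c \<in> S" "d \<in> S" and "a < b" "b < c" "c < d"
  shows "cupT a b c \<or> cupT b c d"
  using no_4cap[of "[a, b, c, d]"] assms by (auto simp: is_cap_iff_is_cup_neg is_cup_Cons_Cons)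

lemma cup_not_extendable_right:
  assumes "is_cup S cupT C" and "length C = n - 1" and "t \<in> S" and "last C < t"
  shows "\<not> cupT (last (butlast C)) (last C) t"
proof
  assume "cupT (last (butlast C)) (last C) t"
  moreover have "butlast C \<noteq> []"
    using assms(2) n_ge_3 by (simp flip: length_greater_0_conv)
  ultimately have "is_cup S cupT (C @ [t])"
    using assms is_cup_append[of C "[t]" S cupT] is_cup_not_Nil[OF assms(1)] by simp
  then show False
    using no_ncup assms(2) n_ge_3 by fastforce
qed

lemma cup_not_extendable_left:
  assumes "is_cup S cupT C" and "length C = n - 1" and "t \<in> S" and "t < hd C"
  shows "\<not> cupT t (hd C) (hd (tl C))"
proof
  assume "cupT t (hd C) (hd (tl C))"
  moreover have "tl C \<noteq> []"
    using assms(2) n_ge_3 by (simp flip: length_greater_0_conv)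
  ultimately have "is_cup S cupT ([t] @ C)"
    using assms is_cup_append[of "[t]" C S cupT] is_cup_not_Nil[OF assms(1)] by simp
  then show False
    using no_ncup assms(2) n_ge_3 by fastforce
qed

lemma gon_if_strictly_interweaved:
  assumes L1: "laced S cupT n C1" and L2: "laced S cupT n C2"
    and "hd C1 < hd C2" and "hd C2 < last C1" and "last C1 < last C2"
  shows "has_gon S cupT 3 (n - 1)"
proof -
  define p q r s where "p = hd C1" and "q = hd C2" and "r = last C1" and "s = last C2"
  have C1: "is_cup S cupT C1" "length C1 = n - 1" and C2: "is_cup S cupT C2" "length C2 = n - 1"
    using L1 L2 by (auto simp: laced_def)
  have "tl C1 \<noteq> []" "butlast C1 \<noteq> []" "tl C2 \<noteq> []"
    using C1(2) C2(2) n_ge_3 by (auto simp flip: length_greater_0_conv)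
  note in_S = is_cup_hd_last_in[OF C1(1)] is_cup_hd_last_in[OF C2(1)]
    is_cup_hd_last_in(1)[OF is_cup_tl(1)[OF C2(1) \<open>tl C2 \<noteq> []\<close>]]
    is_cup_hd_last_in(2)[OF is_cup_butlast(1)[OF C1(1) \<open>butlast C1 \<noteq> []\<close>]]
  have order: "p < q" "q < r" "r < s" "q < hd (tl C2)" "last (butlast C1) < r"
    using assms(3-5) is_cup_tl(2)[OF C2(1)] is_cup_butlast(2)[OF C1(1)] \<open>tl C2 \<noteq> []\<close>
      \<open>butlast C1 \<noteq> []\<close> p_def q_def r_def s_def by simp_all
  consider (cap_pqr) "\<not> cupT p q r" | (cap_qrs) "\<not> cupT q r s" | (cups) "cupT p q r" "cupT q r s"
    by blast
  then show ?thesis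
  proof cases
    case cap_pqr
    then show ?thesis
      using has_gon_3I[OF C1(1), of q] C1(2) in_S order p_def q_def r_def by simp
  next
    case cap_qrs
    then show ?thesis
      using has_gon_3I[OF C2(1), of r] C2(2) in_S order q_def r_def s_def by simp
  next
    case cups
    have "cupT x p q" if "x \<in> S" "x < p" for x
      using cup_among_four[of x p q "hd (tl C2)"] cup_not_extendable_left[OF C2, of p]
        that in_S order p_def q_def by auto
    then obtain v where v: "v \<in> S" "r < v" "\<not> cupT q r v"
      using laced_bypass[OF L1, of q] no_ncup cups in_S order p_def q_def r_def by fastforce
    have "cupT r s w" if "w \<in> S" "s < w" for w
      using cup_among_four[of "last (butlast C1)" r s w] cup_not_extendable_right[OF C1, of s]
        that in_S order r_def s_def by auto
    then obtain u where u: "u \<in> S" "u < q" "\<not> cupT u q r"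
      using laced_bypass[OF L2, of r] no_ncup cups in_S order q_def r_def s_def by fastforce
    show ?thesis
      using cup_among_four[of u q r v] u v in_S order q_def r_def by auto
  qed
qed

lemma gon_if_touching:
  assumes C1: "is_cup S cupT C1" "length C1 = n - 1" and C2: "is_cup S cupT C2" "length C2 = n - 1"
    and touch: "last C1 = hd C2"
  shows "has_gon S cupT 3 (n - 1)"
proof -
  define r c d where "r = last C1" and "c = last (butlast C1)" and "d = hd (tl C2)"
  have "butlast C1 \<noteq> []" "tl C2 \<noteq> []" "tl C1 \<noteq> []"
    using C1(2) C2(2) n_ge_3 by (auto simp flip: length_greater_0_conv)
  note C1' = is_cup_butlast[OF C1(1) this(1)] and C2' = is_cup_tl[OF C2(1) this(2)]
  have in_S: "r \<in> S" "c \<in> S" "d \<in> S"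
    using is_cup_hd_last_in C1' C2' r_def c_def d_def by (metis C1(1))+
  have order: "hd C1 < r" "c < r" "r < d" "r < last C2"
    using is_cup_hd_less_last[OF C1(1)] is_cup_hd_less_last[OF C2(1)] C1' C2' touch
      \<open>tl C1 \<noteq> []\<close> \<open>tl C2 \<noteq> []\<close> r_def c_def d_def
    by auto
  have "cupT (last (butlast (butlast C1))) c d \<or> cupT c d (hd (tl (tl C2)))"
    if "butlast (butlast C1) \<noteq> []" and "tl (tl C2) \<noteq> []"
    using cup_among_four[of "last (butlast (butlast C1))" c d "hd (tl (tl C2))"]
      is_cup_butlast[OF C1'(1) that(1)] is_cup_tl[OF C2'(1) that(2)]
      is_cup_hd_last_in(2)[OF is_cup_butlast(1)[OF C1'(1) that(1)]]
      is_cup_hd_last_in(1)[OF is_cup_tl(1)[OF C2'(1) that(2)]] in_S order c_def d_def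
    by auto
  then consider (replace_last) "butlast (butlast C1) \<noteq> [] \<longrightarrow> cupT (last (butlast (butlast C1))) c d"
    | (replace_first) "tl (tl C2) \<noteq> [] \<longrightarrow> cupT c d (hd (tl (tl C2)))"
    by blast
  then show ?thesis
  proof cases
    case replace_last
    define B where "B = butlast C1 @ [d]"
    have "is_cup S cupT B"
      using is_cup_append[of "butlast C1" "[d]" S cupT] replace_last C1' in_S order B_def c_def
        \<open>butlast C1 \<noteq> []\<close> by simp
    moreover have "hd B = hd C1"
      using \<open>butlast C1 \<noteq> []\<close> B_def by (metis append_butlast_last_id butlast.simps(1) hd_append2)
    moreover have "length B = n - 1" "last B = d"
      using C1(2) n_ge_3 B_def by auto
    moreover have "\<not> cupT (hd C1) r d"
      using cup_not_extendable_left[OF C2, of "hd C1"] is_cup_hd_last_in[OF C1(1)] touch order r_def d_def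
      by simp
    ultimately show ?thesis
      using has_gon_3I[of S cupT B r] in_S order by simp
  next
    case replace_first
    define B where "B = [c] @ tl C2"
    have "is_cup S cupT B"
      using is_cup_append[of "[c]" "tl C2" S cupT] replace_first C2' in_S order B_def d_def
        \<open>tl C2 \<noteq> []\<close> by simp
    moreover have "length B = n - 1" "hd B = c" "last B = last C2"
      using C2(2) n_ge_3 \<open>tl C2 \<noteq> []\<close> B_def by (auto simp: last_tl)
    moreover have "\<not> cupT c r (last C2)"
      using cup_not_extendable_right[OF C1, of "last C2"] is_cup_hd_last_in[OF C2(1)] order r_def c_def
      by simp
    ultimately show ?thesis
      using has_gon_3I[of S cupT B r] in_S order by simp
  qed
qed

end

theorem lemma5p2:
  fixes S :: "'a::linorder set" and cupT :: "'a \<Rightarrow> 'a \<Rightarrow> 'a \<Rightarrow> bool" and n :: nat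
  assumes "finite S" and "n \<ge> 3"
    and "\<not> (\<exists>C. is_cap S cupT C \<and> length C = 4)"
    and "\<not> (\<exists>C. is_cup S cupT C \<and> length C = n)"
    and "\<exists>C1 C2. laced S cupT n C1 \<and> laced S cupT n C2 \<and> interweaved C1 C2"
  shows "has_gon S cupT 3 (n - 1)"
proof -
  interpret cap4_free_cupn_free S cupT n
    using assms(2-4) by unfold_locales blast+
  obtain C1 C2 where L1: "laced S cupT n C1" and L2: "laced S cupT n C2" and "interweaved C1 C2"
    using assms(5) by blast
  then consider (strict) "hd C1 < hd C2" "hd C2 < last C1" "last C1 < last C2"
    | (touching) "last C1 = hd C2"
    unfolding interweaved_def by fastforce
  then show ?thesis
  proof cases
    case strict
    then show ?thesis using gon_if_strictly_interweaved[OF L1 L2] by blast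
  next
    case touching
    then show ?thesis using gon_if_touching L1 L2 unfolding laced_def by blast
  qed
qed

end
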